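(* Let $L>0$, let $p,w\in C^2([0,L])$ be positive-valued functions with $p^{-1},w^{-1}\in L^\infty(]0,L[)$, and let $q\in C([0,L])$ be nonnegative-valued. Let $T$ be the operator $Tu=-\frac{1}{w}(pu')'+\frac{q}{w}u$ with domain $D(T)=\{u\in L^2(]0,L[,w(x)dx):\ Tu\in L^2(]0,L[,w(x)dx),\ u(0)=u(L)=0\}$. Let $\lambda>0$ and let $\phi_\lambda\in D(T)$ be a nonzero solution of $T\phi_\lambda=\lambda\phi_\lambda$. Define $y(x)=\int_0^x\sqrt{w(s)/p(s)}\,ds$ for $x\in[0,L]$, $B=\int_0^L\sqrt{w(s)/p(s)}\,ds$, let $x(y)$ denote the inverse of $y:[0,L]\to[0,B]$, and set $f(y)=(w(x(y))p(x(y)))^{1/4}$ and $Q(y)=f''(y)/f(y)+q(x(y))/w(x(y))$ for $y\in[0,B]$. Let $$a(B,\lambda)=\frac{B\|Q\|_\infty}{2\sqrt{\lambda}},\qquad b(B,\lambda)=\left(\frac{B^3}{12}+\frac{5B}{32\lambda}+\frac{5}{32\lambda^{3/2}}\right)^{1/4}\frac{\|Q\|_4}{\sqrt\lambda},$$ where the norms of $Q$ are taken in $L^\infty(]0,B[)$ and $L^4(]0,B[)$. Let $\Phi_\lambda(y)=\sin(\sqrt\lambda\, y)$ for $y\in[0,B]$, and set $$\beta(p,w)=\|w\|_\infty^{-2}\,\|p^{-1/2}w^{-3/2}\|_\infty^{-1},\qquad \gamma(p,w)=\|w^{-1}\|_\infty^{2}\,\|p^{1/2}w^{3/2}\|_\infty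 .$$ If $a(B,\lambda)<1$ and $b(B,\lambda)<1$, then $$\beta(p,w)\left(\frac{1-b(B,\lambda)}{1+a(B,\lambda)}\right)^4\le\frac{\alpha(\phi_\lambda)}{\alpha(\Phi_\lambda)}\le\gamma(p,w)\left(\frac{1+b(B,\lambda)}{1-a(B,\lambda)}\right)^4 .$$
   Context: For a function $g$ on an interval $I$ (here $I=]0,L[$ or $]0,B[$), $\|g\|_t$ denotes the (unweighted, Lebesgue measure) norm of $L^t(I)$, and the localization coefficient is $\alpha(g)=\|g\|_2^4/\|g\|_4^4$; thus $\alpha(\phi_\lambda)$ uses norms on $]0,L[$ and $\alpha(\Phi_\lambda)$ uses norms on $]0,B[$. The norms $\|w\|_\infty$, $\|w^{-1}\|_\infty$, $\|p^{\pm1/2}w^{\pm3/2}\|_\infty$ are sup norms on $]0,L[$. *)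

theory Defs
  imports "HOL-Analysis.Analysis"
begin

definition C2_on :: "real \<Rightarrow> real \<Rightarrow> (real \<Rightarrow> real) \<Rightarrow> bool" where
  "C2_on a b g \<longleftrightarrow> (\<exists>g1 g2.
      (\<forall>x\<in>{a..b}. (g has_real_derivative g1 x) (at x within {a..b})) \<and>
      (\<forall>x\<in>{a..b}. (g1 has_real_derivative g2 x) (at x within {a..b})) \<and>
      continuous_on {a..b} g2)"

definition Lnorm :: "real \<Rightarrow> real \<Rightarrow> real \<Rightarrow> (real \<Rightarrow> real) \<Rightarrow> real" where
  "Lnorm a b t g = (integral {a..b} (\<lambda>x. \<bar>g x\<bar> powr t)) powr (1 / t)"

definition supnorm :: "real set \<Rightarrow> (real \<Rightarrow> real) \<Rightarrow> real" where
  "supnorm S g = (SUP x\<in>S. \<bar>g x\<bar>)"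

definition loc_coeff :: "real \<Rightarrow> real \<Rightarrow> (real \<Rightarrow> real) \<Rightarrow> real" where
  "loc_coeff a b g = (Lnorm a b 2 g) ^ 4 / (Lnorm a b 4 g) ^ 4"

end

theory Submission
  imports Defs
begin

text \<open>
  The Liouville transformation y(x) = integral of sqrt (w/p) over [0, x], u = (w p)^(1/4) phi turns
  the eigenvalue equation into -u'' + Q u = lam u on [0, B] with u(0) = u(B) = 0.  By Duhamel's
  formula u is a multiple c Phi of the unperturbed sine plus the convolution of
  sin (sqrt lam y) / sqrt lam with Q u.  Cauchy-Schwarz bounds this remainder by a ||u||_2 in L^2
  and by b ||u||_4 in L^4, and Minkowski's inequality then traps alpha(u) / alpha(Phi) between
  ((1 - b)/(1 + a))^4 and ((1 + b)/(1 - a))^4.  Finally, changing variables gives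
  integral phi^2 dx = integral u^2 / w dy and integral phi^4 dx = integral u^4 p^(-1/2) w^(-3/2) dy,
  so alpha(phi) differs from alpha(u) at most by the factors beta(p, w) and gamma(p, w).
\<close>

subsection \<open>Integral inequalities on an interval\<close>

lemma Lnorm_nonneg: "0 \<le> Lnorm a b t g"
  by (simp add: Lnorm_def)

lemma Lnorm_power:
  assumes "n > 0"
  shows "Lnorm a b (real n) g ^ n = integral {a..b} (\<lambda>x. \<bar>g x\<bar> ^ n)"
proof -
  have "(\<lambda>x. \<bar>g x\<bar> powr real n) = (\<lambda>x. \<bar>g x\<bar> ^ n)"
    using assms by (simp add: powr_realpow')
  moreover have "integral {a..b} (\<lambda>x. \<bar>g x\<bar> ^ n) \<ge> 0"
    by (cases "(\<lambda>x. \<bar>g x\<bar> ^ n) integrable_on {a..b}")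
      (auto simp: integral_nonneg not_integrable_integral)
  ultimately show ?thesis
    using assms by (simp add: Lnorm_def powr_powr powr_realpow' flip: powr_realpow')
qed

lemma Lnorm_2_power: "Lnorm a b 2 g ^ 2 = integral {a..b} (\<lambda>x. (g x)\<^sup>2)"
  using Lnorm_power[of 2 a b g] by simp

lemma Lnorm_4_power: "Lnorm a b 4 g ^ 4 = integral {a..b} (\<lambda>x. (g x) ^ 4)"
  using Lnorm_power[of 4 a b g] by (simp add: power_even_abs_numeral)

lemma Lnorm_cmult:
  assumes "t > 0"
  shows "Lnorm a b t (\<lambda>x. c * g x) = \<bar>c\<bar> * Lnorm a b t g"
proof -
  have "integral {a..b} (\<lambda>x. \<bar>g x\<bar> powr t) \<ge> 0"
    by (cases "(\<lambda>x. \<bar>g x\<bar> powr t) integrable_on {a..b}")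
      (auto simp: integral_nonneg not_integrable_integral)
  then show ?thesis
    using assms by (simp add: Lnorm_def abs_mult powr_mult powr_powr)
qed

lemma Lnorm_uminus: "Lnorm a b t (\<lambda>x. - g x) = Lnorm a b t g"
  by (simp add: Lnorm_def)

lemma Lnorm_2_square: "Lnorm a b 2 (\<lambda>x. (g x)\<^sup>2) = (Lnorm a b 4 g)\<^sup>2"
proof -
  have "Lnorm a b 2 (\<lambda>x. (g x)\<^sup>2) ^ 2 = ((Lnorm a b 4 g)\<^sup>2) ^ 2"
    by (simp add: Lnorm_2_power Lnorm_4_power flip: power_mult)
  then show ?thesis
    by (rule power2_eq_imp_eq) (simp_all add: Lnorm_nonneg)
qed

lemma nonneg_discriminant_le:
  fixes A C D :: real
  assumes nonneg: "\<And>t. 0 \<le> A + 2 * t * C + t\<^sup>2 * D" and "D \<ge> 0"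
  shows "C\<^sup>2 \<le> A * D"
proof (cases "D = 0")
  case True
  have "0 \<le> A + 2 * (- (A + 1) / (2 * C)) * C"
    using nonneg[of "- (A + 1) / (2 * C)"] True by simp
  then have "C = 0"
    by (cases "C = 0") (simp_all add: field_simps)
  then show ?thesis
    using True by simp
next
  case False
  then have "D > 0"
    using \<open>D \<ge> 0\<close> by simp
  have "0 \<le> A + 2 * (- C / D) * C + (- C / D)\<^sup>2 * D"
    by (rule nonneg)
  also have "\<dots> = (A * D - C\<^sup>2) / D"
    using \<open>D > 0\<close> by (simp add: field_simps power2_eq_square)
  finally show ?thesis
    using \<open>D > 0\<close> by (simp add: zero_le_divide_iff)
qed

lemma Cauchy_Schwarz_integral:
  fixes f g :: "real \<Rightarrow> real"
  assumes f: "continuous_on {a..b} f" and g: "continuous_on {a..b} g"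
  shows "(integral {a..b} (\<lambda>x. f x * g x))\<^sup>2
           \<le> integral {a..b} (\<lambda>x. (f x)\<^sup>2) * integral {a..b} (\<lambda>x. (g x)\<^sup>2)"
proof (rule nonneg_discriminant_le)
  have int: "(\<lambda>x. (f x)\<^sup>2) integrable_on {a..b}" "(\<lambda>x. f x * g x) integrable_on {a..b}"
    "(\<lambda>x. (g x)\<^sup>2) integrable_on {a..b}"
    by (intro integrable_continuous_real continuous_intros f g)+
  show "integral {a..b} (\<lambda>x. (g x)\<^sup>2) \<ge> 0"
    using int(3) by (rule integral_nonneg) simp
  fix t :: real
  have "0 \<le> integral {a..b} (\<lambda>x. (f x + t * g x)\<^sup>2)"
    by (intro integral_nonneg integrable_continuous_real continuous_intros f g) simp
  also have "\<dots> = integral {a..b} (\<lambda>x. (f x)\<^sup>2 + 2 * t * (f x * g x) + t\<^sup>2 * (g x)\<^sup>2)"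
    by (simp add: power2_eq_square algebra_simps)
  also have "\<dots> = integral {a..b} (\<lambda>x. (f x)\<^sup>2) + 2 * t * integral {a..b} (\<lambda>x. f x * g x)
                   + t\<^sup>2 * integral {a..b} (\<lambda>x. (g x)\<^sup>2)"
    using int by (simp add: integral_add integrable_add integrable_on_mult_right)
  finally show "0 \<le> integral {a..b} (\<lambda>x. (f x)\<^sup>2) + 2 * t * integral {a..b} (\<lambda>x. f x * g x)
                   + t\<^sup>2 * integral {a..b} (\<lambda>x. (g x)\<^sup>2)" .
qed

lemma integral_mult_le_Lnorm_2:
  fixes f g :: "real \<Rightarrow> real"
  assumes "continuous_on {a..b} f" "continuous_on {a..b} g"
  shows "integral {a..b} (\<lambda>x. f x * g x) \<le> Lnorm a b 2 f * Lnorm a b 2 g"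
proof -
  have "(integral {a..b} (\<lambda>x. f x * g x))\<^sup>2 \<le> (Lnorm a b 2 f * Lnorm a b 2 g)\<^sup>2"
    using Cauchy_Schwarz_integral[OF assms] by (simp add: power_mult_distrib Lnorm_2_power)
  then show ?thesis
    by (rule power2_le_imp_le) (simp add: Lnorm_nonneg)
qed

lemma Lnorm_2_triangle:
  fixes f g :: "real \<Rightarrow> real"
  assumes f: "continuous_on {a..b} f" and g: "continuous_on {a..b} g"
  shows "Lnorm a b 2 (\<lambda>x. f x + g x) \<le> Lnorm a b 2 f + Lnorm a b 2 g"
proof (rule power2_le_imp_le)
  have int: "(\<lambda>x. (f x)\<^sup>2) integrable_on {a..b}" "(\<lambda>x. f x * g x) integrable_on {a..b}"
    "(\<lambda>x. (g x)\<^sup>2) integrable_on {a..b}"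
    by (intro integrable_continuous_real continuous_intros f g)+
  have "(Lnorm a b 2 (\<lambda>x. f x + g x))\<^sup>2
          = integral {a..b} (\<lambda>x. (f x)\<^sup>2 + 2 * (f x * g x) + (g x)\<^sup>2)"
    unfolding Lnorm_2_power by (simp add: power2_eq_square algebra_simps)
  also have "\<dots> = (Lnorm a b 2 f)\<^sup>2 + 2 * integral {a..b} (\<lambda>x. f x * g x) + (Lnorm a b 2 g)\<^sup>2"
    using int unfolding Lnorm_2_power
    by (simp add: integral_add integrable_add integrable_on_mult_right)
  also have "\<dots> \<le> (Lnorm a b 2 f + Lnorm a b 2 g)\<^sup>2"
    using integral_mult_le_Lnorm_2[OF f g] by (simp add: power2_sum)
  finally show "(Lnorm a b 2 (\<lambda>x. f x + g x))\<^sup>2 \<le> (Lnorm a b 2 f + Lnorm a b 2 g)\<^sup>2" .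
qed (simp add: Lnorm_nonneg)

lemma Lnorm_2_mult_le:
  fixes f h :: "real \<Rightarrow> real"
  assumes f: "continuous_on {a..b} f" and h: "continuous_on {a..b} h"
  shows "Lnorm a b 2 (\<lambda>x. f x * h x) \<le> Lnorm a b 4 f * Lnorm a b 4 h"
proof (rule power2_le_imp_le)
  have "(Lnorm a b 2 (\<lambda>x. f x * h x))\<^sup>2 = integral {a..b} (\<lambda>x. (f x)\<^sup>2 * (h x)\<^sup>2)"
    by (simp add: Lnorm_2_power power_mult_distrib)
  also have "\<dots> \<le> Lnorm a b 2 (\<lambda>x. (f x)\<^sup>2) * Lnorm a b 2 (\<lambda>x. (h x)\<^sup>2)"
    by (intro integral_mult_le_Lnorm_2 continuous_intros f h)
  finally show "(Lnorm a b 2 (\<lambda>x. f x * h x))\<^sup>2 \<le> (Lnorm a b 4 f * Lnorm a b 4 h)\<^sup>2"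
    by (simp add: Lnorm_2_square power_mult_distrib)
qed (simp add: Lnorm_nonneg)

lemma Lnorm_2_mult_le_bound:
  fixes f h :: "real \<Rightarrow> real"
  assumes f: "continuous_on {a..b} f" and h: "continuous_on {a..b} h" and "a \<le> b"
    and bound: "\<And>x. x \<in> {a..b} \<Longrightarrow> \<bar>f x\<bar> \<le> M"
  shows "Lnorm a b 2 (\<lambda>x. f x * h x) \<le> M * Lnorm a b 2 h"
proof (rule power2_le_imp_le)
  have "(Lnorm a b 2 (\<lambda>x. f x * h x))\<^sup>2 = integral {a..b} (\<lambda>x. (f x)\<^sup>2 * (h x)\<^sup>2)"
    by (simp add: Lnorm_2_power power_mult_distrib)
  also have "\<dots> \<le> integral {a..b} (\<lambda>x. M\<^sup>2 * (h x)\<^sup>2)"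
    using bound by (intro integral_le integrable_continuous_real continuous_intros f h mult_right_mono)
      (simp_all, metis abs_ge_zero power2_abs power_mono)
  finally show "(Lnorm a b 2 (\<lambda>x. f x * h x))\<^sup>2 \<le> (M * Lnorm a b 2 h)\<^sup>2"
    by (simp add: Lnorm_2_power power_mult_distrib)
  have "M \<ge> 0"
    using bound[of a] \<open>a \<le> b\<close> by simp
  then show "0 \<le> M * Lnorm a b 2 h"
    by (simp add: Lnorm_nonneg)
qed

lemma Hoelder_integral_4:
  fixes f h :: "real \<Rightarrow> real"
  assumes f: "continuous_on {a..b} f" and h: "continuous_on {a..b} h"
  shows "integral {a..b} (\<lambda>x. f x * (h x) ^ 3) \<le> Lnorm a b 4 f * (Lnorm a b 4 h) ^ 3"
proof -
  have "integral {a..b} (\<lambda>x. f x * (h x) ^ 3) = integral {a..b} (\<lambda>x. (f x * h x) * (h x)\<^sup>2)"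
    by (simp add: power2_eq_square power3_eq_cube mult_ac)
  also have "\<dots> \<le> Lnorm a b 2 (\<lambda>x. f x * h x) * (Lnorm a b 4 h)\<^sup>2"
    using integral_mult_le_Lnorm_2[of a b "\<lambda>x. f x * h x" "\<lambda>x. (h x)\<^sup>2"] f h
    by (simp add: continuous_intros Lnorm_2_square)
  also have "\<dots> \<le> Lnorm a b 4 f * Lnorm a b 4 h * (Lnorm a b 4 h)\<^sup>2"
    by (intro mult_right_mono Lnorm_2_mult_le f h) simp
  finally show ?thesis
    by (simp add: power2_eq_square power3_eq_cube mult_ac)
qed

lemma Lnorm_4_triangle:
  fixes f g :: "real \<Rightarrow> real"
  assumes f: "continuous_on {a..b} f" and g: "continuous_on {a..b} g"
  shows "Lnorm a b 4 (\<lambda>x. f x + g x) \<le> Lnorm a b 4 f + Lnorm a b 4 g"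
proof -
  define N where "N = Lnorm a b 4 (\<lambda>x. f x + g x)"
  have fg: "continuous_on {a..b} (\<lambda>x. f x + g x)"
    by (intro continuous_intros f g)
  have "N ^ 4 = integral {a..b} (\<lambda>x. f x * (f x + g x) ^ 3 + g x * (f x + g x) ^ 3)"
    unfolding N_def Lnorm_4_power by (simp add: power_Suc algebra_simps eval_nat_numeral)
  also have "\<dots> = integral {a..b} (\<lambda>x. f x * (f x + g x) ^ 3) + integral {a..b} (\<lambda>x. g x * (f x + g x) ^ 3)"
    by (intro integral_add integrable_continuous_real continuous_intros f g)
  also have "\<dots> \<le> (Lnorm a b 4 f + Lnorm a b 4 g) * N ^ 3"
    unfolding N_def distrib_right by (intro add_mono Hoelder_integral_4 f g fg)
  finally have "N * N ^ 3 \<le> (Lnorm a b 4 f + Lnorm a b 4 g) * N ^ 3"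
    by (simp add: eval_nat_numeral)
  moreover have "N \<ge> 0"
    unfolding N_def by (rule Lnorm_nonneg)
  ultimately show ?thesis
    unfolding N_def[symmetric]
    by (cases "N = 0") (simp_all add: Lnorm_nonneg add_nonneg_nonneg)
qed

lemma Lnorm_triangle:
  fixes f g :: "real \<Rightarrow> real"
  assumes "t \<in> {2, 4}" "continuous_on {a..b} f" "continuous_on {a..b} g"
  shows "Lnorm a b t (\<lambda>x. f x + g x) \<le> Lnorm a b t f + Lnorm a b t g"
  using assms Lnorm_2_triangle Lnorm_4_triangle by auto

lemma Lnorm_perturbation_bounds:
  fixes u v :: "real \<Rightarrow> real"
  assumes t: "t \<in> {2, 4}" and u: "continuous_on {a..b} u" and v: "continuous_on {a..b} v"
    and close: "Lnorm a b t (\<lambda>x. u x - c * v x) \<le> \<epsilon> * Lnorm a b t u"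
  shows "(1 - \<epsilon>) * Lnorm a b t u \<le> \<bar>c\<bar> * Lnorm a b t v"
    and "\<bar>c\<bar> * Lnorm a b t v \<le> (1 + \<epsilon>) * Lnorm a b t u"
proof -
  have "t > 0"
    using t by auto
  have "Lnorm a b t (\<lambda>x. c * v x + (u x - c * v x)) \<le> Lnorm a b t (\<lambda>x. c * v x) + Lnorm a b t (\<lambda>x. u x - c * v x)"
    by (intro Lnorm_triangle t continuous_intros u v)
  then show "(1 - \<epsilon>) * Lnorm a b t u \<le> \<bar>c\<bar> * Lnorm a b t v"
    using close by (simp add: Lnorm_cmult[OF \<open>t > 0\<close>] algebra_simps)
  have "Lnorm a b t (\<lambda>x. u x + - (u x - c * v x)) \<le> Lnorm a b t u + Lnorm a b t (\<lambda>x. - (u x - c * v x))"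
    by (intro Lnorm_triangle t continuous_intros u v)
  then show "\<bar>c\<bar> * Lnorm a b t v \<le> (1 + \<epsilon>) * Lnorm a b t u"
    using close unfolding Lnorm_uminus by (simp add: Lnorm_cmult[OF \<open>t > 0\<close>] algebra_simps)
qed

lemma loc_coeff_ratio_bounds:
  fixes u v :: "real \<Rightarrow> real"
  assumes u: "continuous_on {a..b} u" and v: "continuous_on {a..b} v"
    and "0 \<le> \<alpha>" "\<alpha> < 1" "0 \<le> \<beta>" "\<beta> < 1"
    and close2: "Lnorm a b 2 (\<lambda>x. u x - c * v x) \<le> \<alpha> * Lnorm a b 2 u"
    and close4: "Lnorm a b 4 (\<lambda>x. u x - c * v x) \<le> \<beta> * Lnorm a b 4 u"
    and u2: "Lnorm a b 2 u > 0" and u4: "Lnorm a b 4 u > 0"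
  shows "((1 - \<beta>) / (1 + \<alpha>)) ^ 4 \<le> loc_coeff a b u / loc_coeff a b v"
    and "loc_coeff a b u / loc_coeff a b v \<le> ((1 + \<beta>) / (1 - \<alpha>)) ^ 4"
proof -
  define s2 where "s2 = \<bar>c\<bar> * Lnorm a b 2 v / Lnorm a b 2 u"
  define s4 where "s4 = \<bar>c\<bar> * Lnorm a b 4 v / Lnorm a b 4 u"
  have s2: "1 - \<alpha> \<le> s2" "s2 \<le> 1 + \<alpha>"
    using Lnorm_perturbation_bounds[OF _ u v close2] u2 by (simp_all add: s2_def field_simps)
  have s4: "1 - \<beta> \<le> s4" "s4 \<le> 1 + \<beta>"
    using Lnorm_perturbation_bounds[OF _ u v close4] u4 by (simp_all add: s4_def field_simps)
  have "s2 > 0" "s4 > 0"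
    using s2 s4 \<open>\<alpha> < 1\<close> \<open>\<beta> < 1\<close> by linarith+
  then have "c \<noteq> 0" "Lnorm a b 2 v > 0" "Lnorm a b 4 v > 0"
    using u2 u4 Lnorm_nonneg[of a b 2 v] Lnorm_nonneg[of a b 4 v]
    by (auto simp: s2_def s4_def zero_less_divide_iff zero_less_mult_iff)
  then have ratio: "loc_coeff a b u / loc_coeff a b v = (s4 / s2) ^ 4"
    using u2 u4 unfolding loc_coeff_def s2_def s4_def by (simp add: field_simps)
  have "(1 - \<beta>) / (1 + \<alpha>) \<le> s4 / s2"
    using s2 s4 \<open>s2 > 0\<close> \<open>s4 > 0\<close> by (intro frac_le) auto
  then show "((1 - \<beta>) / (1 + \<alpha>)) ^ 4 \<le> loc_coeff a b u / loc_coeff a b v"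
    unfolding ratio using \<open>\<beta> < 1\<close> \<open>0 \<le> \<alpha>\<close> by (intro power_mono) auto
  have "s4 / s2 \<le> (1 + \<beta>) / (1 - \<alpha>)"
    using s2 s4 \<open>s4 > 0\<close> \<open>\<alpha> < 1\<close> by (intro frac_le) auto
  then show "loc_coeff a b u / loc_coeff a b v \<le> ((1 + \<beta>) / (1 - \<alpha>)) ^ 4"
    unfolding ratio using \<open>s2 > 0\<close> \<open>s4 > 0\<close> by (intro power_mono) auto
qed

lemma loc_coeff_eq_integrals:
  "loc_coeff a b g = (integral {a..b} (\<lambda>x. (g x)\<^sup>2))\<^sup>2 / integral {a..b} (\<lambda>x. (g x) ^ 4)"
proof -
  have "Lnorm a b 2 g ^ 4 = (Lnorm a b 2 g ^ 2)\<^sup>2"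
    by simp
  then show ?thesis
    unfolding loc_coeff_def Lnorm_4_power Lnorm_2_power by simp
qed

lemma weighted_loc_coeff_bounds:
  fixes u \<rho> \<sigma> :: "real \<Rightarrow> real"
  assumes u: "continuous_on {a..b} u" and \<rho>: "continuous_on {a..b} \<rho>" and \<sigma>: "continuous_on {a..b} \<sigma>"
    and \<rho>_bounds: "\<And>x. x \<in> {a..b} \<Longrightarrow> l2 \<le> \<rho> x \<and> \<rho> x \<le> h2"
    and \<sigma>_bounds: "\<And>x. x \<in> {a..b} \<Longrightarrow> l4 \<le> \<sigma> x \<and> \<sigma> x \<le> h4"
    and "l2 > 0" "l4 > 0" and u4: "integral {a..b} (\<lambda>x. (u x) ^ 4) > 0"
  defines "I2 \<equiv> integral {a..b} (\<lambda>x. (u x)\<^sup>2 * \<rho> x)"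
    and "I4 \<equiv> integral {a..b} (\<lambda>x. (u x) ^ 4 * \<sigma> x)"
  shows "l2\<^sup>2 / h4 * loc_coeff a b u \<le> I2\<^sup>2 / I4"
    and "I2\<^sup>2 / I4 \<le> h2\<^sup>2 / l4 * loc_coeff a b u"
proof -
  define U2 where "U2 = integral {a..b} (\<lambda>x. (u x)\<^sup>2)"
  define U4 where "U4 = integral {a..b} (\<lambda>x. (u x) ^ 4)"
  have int: "(\<lambda>x. (u x)\<^sup>2) integrable_on {a..b}" "(\<lambda>x. (u x) ^ 4) integrable_on {a..b}"
    "(\<lambda>x. (u x)\<^sup>2 * \<rho> x) integrable_on {a..b}" "(\<lambda>x. (u x) ^ 4 * \<sigma> x) integrable_on {a..b}"
    by (intro integrable_continuous_real continuous_intros u \<rho> \<sigma>)+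
  have "U2 \<ge> 0"
    unfolding U2_def using int(1) by (rule integral_nonneg) simp
  have "l2 * U2 \<le> I2" "I2 \<le> h2 * U2" "l4 * U4 \<le> I4" "I4 \<le> h4 * U4"
    unfolding U2_def U4_def I2_def I4_def using int \<rho>_bounds \<sigma>_bounds
    by (auto intro!: integral_le integrable_on_mult_right mult_right_mono simp: mult.commute
        simp flip: integral_mult_right)
  moreover have "U4 > 0"
    using u4 by (simp add: U4_def)
  ultimately have "l2 * U2 \<ge> 0" "I4 > 0"
    using \<open>U2 \<ge> 0\<close> \<open>l2 > 0\<close> \<open>l4 > 0\<close> by (simp, smt (verit) mult_pos_pos)
  have loc: "loc_coeff a b u = U2\<^sup>2 / U4"
    by (simp add: loc_coeff_eq_integrals U2_def U4_def)
  have "(l2 * U2)\<^sup>2 / (h4 * U4) \<le> I2\<^sup>2 / I4"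
    using \<open>l2 * U2 \<le> I2\<close> \<open>I4 \<le> h4 * U4\<close> \<open>l2 * U2 \<ge> 0\<close> \<open>I4 > 0\<close>
    by (intro frac_le power_mono) auto
  then show "l2\<^sup>2 / h4 * loc_coeff a b u \<le> I2\<^sup>2 / I4"
    by (simp add: loc power_mult_distrib)
  have "I2\<^sup>2 / I4 \<le> (h2 * U2)\<^sup>2 / (l4 * U4)"
    using \<open>l2 * U2 \<le> I2\<close> \<open>I2 \<le> h2 * U2\<close> \<open>l4 * U4 \<le> I4\<close> \<open>l2 * U2 \<ge> 0\<close> \<open>U4 > 0\<close> \<open>l4 > 0\<close>
    by (intro frac_le power_mono) auto
  then show "I2\<^sup>2 / I4 \<le> h2\<^sup>2 / l4 * loc_coeff a b u"
    by (simp add: loc power_mult_distrib)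
qed

lemma integral_pos_of_nonneg:
  fixes h :: "real \<Rightarrow> real"
  assumes h: "continuous_on {a..b} h" and nonneg: "\<And>x. x \<in> {a..b} \<Longrightarrow> h x \<ge> 0"
    and "a < b" and x0: "x0 \<in> {a..b}" "h x0 \<noteq> 0"
  shows "integral {a..b} h > 0"
proof -
  have "integral {a..b} h \<noteq> 0"
    using integral_cbox_eq_0_iff[of a b h] h nonneg \<open>a < b\<close> x0 by auto
  moreover have "integral {a..b} h \<ge> 0"
    using nonneg by (intro integral_nonneg integrable_continuous_real h) auto
  ultimately show ?thesis
    by simp
qed

lemma abs_le_supnorm:
  fixes g :: "real \<Rightarrow> real"
  assumes g: "continuous_on {a..b} g" and "a < b" and x: "x \<in> {a..b}"
  shows "\<bar>g x\<bar> \<le> supnorm {a<..<b} g"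
proof -
  have "bounded (g ` {a..b})"
    by (intro compact_imp_bounded compact_continuous_image g compact_Icc)
  then have "bdd_above ((\<lambda>x. \<bar>g x\<bar>) ` {a<..<b})"
    by (force simp: bounded_iff intro: bdd_aboveI2)
  then have "\<forall>y\<in>{a<..<b}. norm (g y) \<le> supnorm {a<..<b} g"
    unfolding supnorm_def by (auto intro: cSUP_upper)
  then show ?thesis
    using continuous_on_closure_norm_le[of "{a<..<b}" g] g x \<open>a < b\<close> by auto
qed

subsection \<open>Perturbations of a sine wave\<close>

lemma has_integral_of_real_derivative:
  fixes G g :: "real \<Rightarrow> real"
  assumes "a \<le> b" "\<And>x. x \<in> {a..b} \<Longrightarrow> (G has_real_derivative g x) (at x)"
  shows "(g has_integral (G b - G a)) {a..b}"
  using assms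
  by (intro fundamental_theorem_of_calculus)
    (auto simp: has_real_derivative_iff_has_vector_derivative[symmetric]
      intro: has_field_derivative_at_within)

lemma integral_sin_square_shifted:
  fixes k Y :: real
  assumes "k > 0" "Y \<ge> 0"
  shows "integral {0..Y} (\<lambda>t. (sin (k * (Y - t)))\<^sup>2) = Y / 2 - sin (2 * k * Y) / (4 * k)"
proof -
  have "((\<lambda>t. (sin (k * (Y - t)))\<^sup>2) has_integral
          ((Y / 2 + sin (2 * k * (Y - Y)) / (4 * k)) - (0 / 2 + sin (2 * k * (Y - 0)) / (4 * k)))) {0..Y}"
  proof (rule has_integral_of_real_derivative)
    fix t :: real
    have "((\<lambda>t. t / 2 + sin (2 * k * (Y - t)) / (4 * k)) has_real_derivative
            1 / 2 - cos (2 * k * (Y - t)) / 2) (at t)"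
      using \<open>k > 0\<close> by (auto intro!: derivative_eq_intros simp: field_simps)
    moreover have "1 / 2 - cos (2 * k * (Y - t)) / 2 = (sin (k * (Y - t)))\<^sup>2"
      using cos_double_sin[of "k * (Y - t)"] by (simp add: mult.assoc field_simps)
    ultimately show "((\<lambda>t. t / 2 + sin (2 * k * (Y - t)) / (4 * k)) has_real_derivative
                      (sin (k * (Y - t)))\<^sup>2) (at t)"
      by simp
  qed (use \<open>Y \<ge> 0\<close> in auto)
  then show ?thesis
    by (simp add: integral_unique)
qed

text \<open>
  Y / 2 - sin (2 k Y) / (4 k) is the squared L^2 norm of the Duhamel kernel sin (k (Y - t)) on [0, Y].
\<close>
lemma integral_sin_kernel_energy_le:
  fixes k B :: real
  assumes "k > 0" "B \<ge> 0"
  shows "integral {0..B} (\<lambda>Y. Y / 2 - sin (2 * k * Y) / (4 * k)) \<le> B\<^sup>2 / 4"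
proof -
  have "((\<lambda>Y. Y / 2 - sin (2 * k * Y) / (4 * k)) has_integral
          ((B\<^sup>2 / 4 + cos (2 * k * B) / (8 * k\<^sup>2)) - (0\<^sup>2 / 4 + cos (2 * k * 0) / (8 * k\<^sup>2)))) {0..B}"
    using assms
    by (intro has_integral_of_real_derivative)
      (auto intro!: derivative_eq_intros simp: field_simps power2_eq_square)
  then have "integral {0..B} (\<lambda>Y. Y / 2 - sin (2 * k * Y) / (4 * k))
               = B\<^sup>2 / 4 + (cos (2 * k * B) - 1) / (8 * k\<^sup>2)"
    by (simp add: integral_unique diff_divide_distrib)
  also have "\<dots> \<le> B\<^sup>2 / 4"
    using \<open>k > 0\<close> by (simp add: divide_nonpos_pos)
  finally show ?thesis .
qed

lemma integral_sin_kernel_energy_square_le: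
  fixes k B :: real
  assumes "k > 0" "B \<ge> 0"
  shows "integral {0..B} (\<lambda>Y. (Y / 2 - sin (2 * k * Y) / (4 * k))\<^sup>2)
           \<le> B ^ 3 / 12 + 5 * B / (32 * k\<^sup>2) + 5 / (32 * k ^ 3)"
proof -
  define T where "T = (\<lambda>Y::real. Y ^ 3 / 12 + Y * cos (2 * k * Y) / (8 * k\<^sup>2) - sin (2 * k * Y) / (16 * k ^ 3)
                                + Y / (32 * k\<^sup>2) - sin (4 * k * Y) / (128 * k ^ 3))"
  have "((\<lambda>Y. (Y / 2 - sin (2 * k * Y) / (4 * k))\<^sup>2) has_integral (T B - T 0)) {0..B}"
  proof (rule has_integral_of_real_derivative)
    fix t :: real
    have "(T has_real_derivative
            t\<^sup>2 / 4 - t * sin (2 * k * t) / (4 * k) + (1 - cos (4 * k * t)) / (32 * k\<^sup>2)) (at t)"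
      unfolding T_def using \<open>k > 0\<close>
      by (auto intro!: derivative_eq_intros simp: field_simps power2_eq_square power3_eq_cube)
    moreover have cos4: "cos (4 * k * t) = 1 - 2 * (sin (2 * k * t))\<^sup>2"
      using cos_double_sin[of "2 * k * t"] by (simp add: mult.assoc)
    have "t\<^sup>2 / 4 - t * sin (2 * k * t) / (4 * k) + (1 - cos (4 * k * t)) / (32 * k\<^sup>2)
                 = (t / 2 - sin (2 * k * t) / (4 * k))\<^sup>2"
      unfolding cos4 using \<open>k > 0\<close> by (simp add: field_simps power2_eq_square)
    ultimately show "(T has_real_derivative (t / 2 - sin (2 * k * t) / (4 * k))\<^sup>2) (at t)"
      by simp
  qed (use \<open>B \<ge> 0\<close> in auto)
  then have "integral {0..B} (\<lambda>Y. (Y / 2 - sin (2 * k * Y) / (4 * k))\<^sup>2) = T B"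
    by (simp add: integral_unique T_def)
  also have "T B \<le> B ^ 3 / 12 + B / (8 * k\<^sup>2) + 1 / (16 * k ^ 3) + B / (32 * k\<^sup>2) + 1 / (128 * k ^ 3)"
  proof -
    have "B * cos (2 * k * B) / (8 * k\<^sup>2) \<le> B / (8 * k\<^sup>2)"
      using assms by (intro divide_right_mono) (auto simp: mult_left_le)
    moreover have "- sin (2 * k * B) / (16 * k ^ 3) \<le> 1 / (16 * k ^ 3)"
      "- sin (4 * k * B) / (128 * k ^ 3) \<le> 1 / (128 * k ^ 3)"
      using assms by (intro divide_right_mono; simp)+
    ultimately show ?thesis
      unfolding T_def by simp
  qed
  also have "\<dots> \<le> B ^ 3 / 12 + 5 * B / (32 * k\<^sup>2) + 5 / (32 * k ^ 3)"
    using assms by (simp add: field_simps)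
  finally show ?thesis .
qed

lemma duhamel_remainder_square_le:
  fixes u Q :: "real \<Rightarrow> real"
  assumes "k > 0" and u: "continuous_on {0..B} u" and Q: "continuous_on {0..B} Q"
    and duhamel: "\<And>Y. Y \<in> {0..B} \<Longrightarrow>
                    u Y = c * sin (k * Y) + integral {0..Y} (\<lambda>t. sin (k * (Y - t)) * (Q t * u t)) / k"
    and Y: "Y \<in> {0..B}"
  shows "(u Y - c * sin (k * Y))\<^sup>2
           \<le> (Y / 2 - sin (2 * k * Y) / (4 * k)) * (Lnorm 0 B 2 (\<lambda>t. Q t * u t))\<^sup>2 / k\<^sup>2"
proof -
  have sub: "{0..Y} \<subseteq> {0..B}"
    using Y by auto
  have QuY: "continuous_on {0..Y} (\<lambda>t. Q t * u t)"
    using sub by (intro continuous_intros continuous_on_subset[OF u] continuous_on_subset[OF Q])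
  have "(integral {0..Y} (\<lambda>t. sin (k * (Y - t)) * (Q t * u t)))\<^sup>2
          \<le> integral {0..Y} (\<lambda>t. (sin (k * (Y - t)))\<^sup>2) * integral {0..Y} (\<lambda>t. (Q t * u t)\<^sup>2)"
    by (intro Cauchy_Schwarz_integral continuous_intros QuY)
  also have "\<dots> \<le> (Y / 2 - sin (2 * k * Y) / (4 * k)) * integral {0..B} (\<lambda>t. (Q t * u t)\<^sup>2)"
  proof (rule mult_mono)
    show "integral {0..Y} (\<lambda>t. (sin (k * (Y - t)))\<^sup>2) \<le> Y / 2 - sin (2 * k * Y) / (4 * k)"
      using integral_sin_square_shifted[OF \<open>k > 0\<close>] Y by simp
    show "integral {0..Y} (\<lambda>t. (Q t * u t)\<^sup>2) \<le> integral {0..B} (\<lambda>t. (Q t * u t)\<^sup>2)"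
      using sub by (intro integral_subset_le integrable_continuous_real continuous_intros QuY u Q) auto
    have "0 \<le> integral {0..Y} (\<lambda>t. (sin (k * (Y - t)))\<^sup>2)"
      by (intro integral_nonneg integrable_continuous_real continuous_intros) simp
    then show "0 \<le> Y / 2 - sin (2 * k * Y) / (4 * k)"
      using integral_sin_square_shifted[OF \<open>k > 0\<close>, of Y] Y by simp
  qed (intro integral_nonneg integrable_continuous_real continuous_intros QuY; simp)
  finally show ?thesis
    using duhamel[OF Y] \<open>k > 0\<close> by (simp add: Lnorm_2_power power_divide divide_right_mono)
qed

lemma duhamel_perturbation_Lnorm_2:
  fixes u Q :: "real \<Rightarrow> real"
  assumes "k > 0" "B \<ge> 0" and u: "continuous_on {0..B} u" and Q: "continuous_on {0..B} Q"
    and duhamel: "\<And>Y. Y \<in> {0..B} \<Longrightarrow>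
                    u Y = c * sin (k * Y) + integral {0..Y} (\<lambda>t. sin (k * (Y - t)) * (Q t * u t)) / k"
    and bound: "\<And>t. t \<in> {0..B} \<Longrightarrow> \<bar>Q t\<bar> \<le> M"
  shows "Lnorm 0 B 2 (\<lambda>Y. u Y - c * sin (k * Y)) \<le> B * M / (2 * k) * Lnorm 0 B 2 u"
proof (rule power2_le_imp_le)
  define G where "G = (Lnorm 0 B 2 (\<lambda>t. Q t * u t))\<^sup>2"
  have "(Lnorm 0 B 2 (\<lambda>Y. u Y - c * sin (k * Y)))\<^sup>2 = integral {0..B} (\<lambda>Y. (u Y - c * sin (k * Y))\<^sup>2)"
    by (rule Lnorm_2_power)
  also have "\<dots> \<le> integral {0..B} (\<lambda>Y. G / k\<^sup>2 * (Y / 2 - sin (2 * k * Y) / (4 * k)))"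
    using duhamel_remainder_square_le[OF \<open>k > 0\<close> u Q duhamel] \<open>k > 0\<close>
    by (intro integral_le integrable_continuous_real continuous_intros u) (auto simp: G_def ac_simps)
  also have "\<dots> = G / k\<^sup>2 * integral {0..B} (\<lambda>Y. Y / 2 - sin (2 * k * Y) / (4 * k))"
    by simp
  also have "\<dots> \<le> G / k\<^sup>2 * (B\<^sup>2 / 4)"
    by (intro mult_left_mono integral_sin_kernel_energy_le \<open>k > 0\<close> \<open>B \<ge> 0\<close>) (simp add: G_def)
  also have "\<dots> \<le> (M * Lnorm 0 B 2 u)\<^sup>2 / k\<^sup>2 * (B\<^sup>2 / 4)"
    unfolding G_def
    by (intro mult_right_mono divide_right_mono power_mono Lnorm_2_mult_le_bound u Q bound)
      (auto simp: \<open>B \<ge> 0\<close> Lnorm_nonneg)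
  also have "\<dots> = (B * M / (2 * k) * Lnorm 0 B 2 u)\<^sup>2"
    by (simp add: power_mult_distrib power_divide ac_simps)
  finally show "(Lnorm 0 B 2 (\<lambda>Y. u Y - c * sin (k * Y)))\<^sup>2 \<le> (B * M / (2 * k) * Lnorm 0 B 2 u)\<^sup>2" .
  have "M \<ge> 0"
    using bound[of 0] \<open>B \<ge> 0\<close> by simp
  then show "0 \<le> B * M / (2 * k) * Lnorm 0 B 2 u"
    using \<open>k > 0\<close> \<open>B \<ge> 0\<close> by (simp add: Lnorm_nonneg)
qed

lemma duhamel_perturbation_Lnorm_4:
  fixes u Q :: "real \<Rightarrow> real"
  assumes "k > 0" "B \<ge> 0" and u: "continuous_on {0..B} u" and Q: "continuous_on {0..B} Q"
    and duhamel: "\<And>Y. Y \<in> {0..B} \<Longrightarrow>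
                    u Y = c * sin (k * Y) + integral {0..Y} (\<lambda>t. sin (k * (Y - t)) * (Q t * u t)) / k"
  defines "C \<equiv> B ^ 3 / 12 + 5 * B / (32 * k\<^sup>2) + 5 / (32 * k ^ 3)"
  shows "Lnorm 0 B 4 (\<lambda>Y. u Y - c * sin (k * Y)) \<le> C powr (1/4) * Lnorm 0 B 4 Q / k * Lnorm 0 B 4 u"
proof -
  define G where "G = (Lnorm 0 B 2 (\<lambda>t. Q t * u t))\<^sup>2"
  have "C > 0"
    unfolding C_def using \<open>k > 0\<close> \<open>B \<ge> 0\<close> by (intro add_nonneg_pos) auto
  have square: "(u Y - c * sin (k * Y)) ^ 4 \<le> G\<^sup>2 / k ^ 4 * (Y / 2 - sin (2 * k * Y) / (4 * k))\<^sup>2"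
    if "Y \<in> {0..B}" for Y
    using power_mono[OF duhamel_remainder_square_le[OF \<open>k > 0\<close> u Q duhamel that], of 2]
    by (simp add: G_def power_mult_distrib power_divide mult_ac flip: power_mult)
  have "Lnorm 0 B 4 (\<lambda>Y. u Y - c * sin (k * Y)) ^ 4 = integral {0..B} (\<lambda>Y. (u Y - c * sin (k * Y)) ^ 4)"
    by (rule Lnorm_4_power)
  also have "\<dots> \<le> integral {0..B} (\<lambda>Y. G\<^sup>2 / k ^ 4 * (Y / 2 - sin (2 * k * Y) / (4 * k))\<^sup>2)"
    using square \<open>k > 0\<close> by (intro integral_le integrable_continuous_real continuous_intros u) auto
  also have "\<dots> \<le> G\<^sup>2 / k ^ 4 * C"
    unfolding C_def
    by (simp only: integral_mult_right, intro mult_left_mono integral_sin_kernel_energy_square_le)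
      (use \<open>k > 0\<close> \<open>B \<ge> 0\<close> in auto)
  also have "\<dots> \<le> ((Lnorm 0 B 4 Q * Lnorm 0 B 4 u)\<^sup>2)\<^sup>2 / k ^ 4 * C"
    unfolding G_def using \<open>C > 0\<close>
    by (intro mult_right_mono divide_right_mono power_mono Lnorm_2_mult_le u Q) (auto simp: Lnorm_nonneg)
  also have "\<dots> = (C powr (1/4) * Lnorm 0 B 4 Q / k * Lnorm 0 B 4 u) ^ 4"
    using \<open>C > 0\<close> by (simp add: power_mult_distrib power_divide powr_power flip: power_mult)
  finally show ?thesis
    using \<open>k > 0\<close> by (simp add: power_mono_iff Lnorm_nonneg)
qed

subsection \<open>The Liouville transformation\<close>

locale liouville_transform =
  fixes L lam :: real and p w p' p'' w' w'' q phi dphi ddphi :: "real \<Rightarrow> real"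
  assumes L_pos: "L > 0"
    and p_deriv: "\<And>x. x \<in> {0..L} \<Longrightarrow> (p has_real_derivative p' x) (at x within {0..L})"
    and p'_deriv: "\<And>x. x \<in> {0..L} \<Longrightarrow> (p' has_real_derivative p'' x) (at x within {0..L})"
    and p''_cont: "continuous_on {0..L} p''"
    and w_deriv: "\<And>x. x \<in> {0..L} \<Longrightarrow> (w has_real_derivative w' x) (at x within {0..L})"
    and w'_deriv: "\<And>x. x \<in> {0..L} \<Longrightarrow> (w' has_real_derivative w'' x) (at x within {0..L})"
    and w''_cont: "continuous_on {0..L} w''"
    and p_pos: "\<And>x. x \<in> {0..L} \<Longrightarrow> p x > 0"
    and w_pos: "\<And>x. x \<in> {0..L} \<Longrightarrow> w x > 0"
    and q_cont: "continuous_on {0..L} q"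
    and lam_pos: "lam > 0"
    and phi_cont: "continuous_on {0..L} phi"
    and phi_deriv: "\<And>x. x \<in> {0<..<L} \<Longrightarrow> (phi has_real_derivative dphi x) (at x)"
    and p_dphi_deriv: "\<And>x. x \<in> {0<..<L} \<Longrightarrow> ((\<lambda>t. p t * dphi t) has_real_derivative ddphi x) (at x)"
    and eigen_eq: "\<And>x. x \<in> {0<..<L} \<Longrightarrow> - ddphi x / w x + q x / w x * phi x = lam * phi x"
    and phi_0: "phi 0 = 0"
begin

lemma at_interior: "x \<in> {0<..<L} \<Longrightarrow> at x within {0..L} = at x"
  by (intro at_within_Icc_at) auto

lemma p_cont: "continuous_on {0..L} p" and p'_cont: "continuous_on {0..L} p'"
  and w_cont: "continuous_on {0..L} w" and w'_cont: "continuous_on {0..L} w'"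
  using p_deriv p'_deriv w_deriv w'_deriv by (blast intro: DERIV_continuous_on)+

lemma interior_derivs:
  assumes "x \<in> {0<..<L}"
  shows "(p has_real_derivative p' x) (at x)" "(p' has_real_derivative p'' x) (at x)"
    and "(w has_real_derivative w' x) (at x)" "(w' has_real_derivative w'' x) (at x)"
  using assms p_deriv[of x] p'_deriv[of x] w_deriv[of x] w'_deriv[of x]
  by (auto simp: at_interior[OF assms])

definition yf' :: "real \<Rightarrow> real" where "yf' x = sqrt (w x / p x)"

definition yf :: "real \<Rightarrow> real" where "yf x = integral {0..x} yf'"

definition B :: real where "B = yf L"

definition xf :: "real \<Rightarrow> real" where "xf = the_inv_into {0..L} yf"

lemma yf'_pos: "x \<in> {0..L} \<Longrightarrow> yf' x > 0"
  unfolding yf'_def using p_pos w_pos by simp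

lemma yf'_cont: "continuous_on {0..L} yf'"
  unfolding yf'_def using p_pos by (intro continuous_intros p_cont w_cont) force

lemma yf_deriv: "x \<in> {0..L} \<Longrightarrow> (yf has_real_derivative yf' x) (at x within {0..L})"
  using integral_has_vector_derivative[OF yf'_cont]
  by (simp add: yf_def[abs_def] has_real_derivative_iff_has_vector_derivative)

lemma yf_interior_deriv: "x \<in> {0<..<L} \<Longrightarrow> (yf has_real_derivative yf' x) (at x)"
  using yf_deriv[of x] by (auto simp: at_interior)

lemma yf_cont: "continuous_on {0..L} yf"
  using yf_deriv by (rule DERIV_continuous_on)

lemma yf_0: "yf 0 = 0"
  unfolding yf_def by simp

lemma yf_strict_mono:
  assumes "0 \<le> x" "x < x'" "x' \<le> L"
  shows "yf x < yf x'"
proof (rule DERIV_pos_imp_increasing_open[OF \<open>x < x'\<close>])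
  fix t assume "x < t" "t < x'"
  then show "\<exists>y. (yf has_real_derivative y) (at t) \<and> 0 < y"
    using assms yf_interior_deriv[of t] yf'_pos[of t] by auto
qed (use yf_cont assms in \<open>auto intro: continuous_on_subset\<close>)

lemma B_pos: "B > 0"
  unfolding B_def using yf_strict_mono[of 0 L] L_pos yf_0 by simp

lemma yf_inj: "inj_on yf {0..L}"
  by (rule inj_onI) (metis atLeastAtMost_iff linorder_cases less_irrefl yf_strict_mono)

lemma yf_image: "yf ` {0..L} = {0..B}"
proof
  show "yf ` {0..L} \<subseteq> {0..B}"
    using yf_strict_mono yf_0 unfolding B_def
    by (force simp: le_less)
  show "{0..B} \<subseteq> yf ` {0..L}"
    using IVT'[of yf 0 _ L] yf_cont L_pos yf_0 unfolding B_def by force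
qed

lemma xf_yf: "x \<in> {0..L} \<Longrightarrow> xf (yf x) = x"
  unfolding xf_def by (rule the_inv_into_f_f[OF yf_inj])

lemma yf_xf: "y \<in> {0..B} \<Longrightarrow> yf (xf y) = y"
  unfolding xf_def by (rule f_the_inv_into_f[OF yf_inj]) (simp add: yf_image)

lemma xf_mem: "y \<in> {0..B} \<Longrightarrow> xf y \<in> {0..L}"
  unfolding xf_def by (rule the_inv_into_into[OF yf_inj]) (auto simp: yf_image)

lemma xf_interior:
  assumes "y \<in> {0<..<B}"
  shows "xf y \<in> {0<..<L}"
proof -
  have "xf y \<in> {0..L}" "yf (xf y) = y"
    using assms xf_mem yf_xf by auto
  moreover have "xf y \<noteq> 0" "xf y \<noteq> L"
    using assms \<open>yf (xf y) = y\<close> yf_0 unfolding B_def by auto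
  ultimately show ?thesis
    by auto
qed

lemma xf_cont: "continuous_on {0..B} xf"
  using continuous_on_inv[OF yf_cont compact_Icc, of xf] xf_yf by (simp add: yf_image)

lemma continuous_on_comp_xf: "continuous_on {0..L} g \<Longrightarrow> continuous_on {0..B} (\<lambda>y. g (xf y))"
  by (rule continuous_on_compose2[OF _ xf_cont]) (use xf_mem in auto)

lemma xf_deriv:
  assumes y: "y \<in> {0<..<B}"
  shows "(xf has_real_derivative inverse (yf' (xf y))) (at y)"
proof (rule DERIV_inverse_function[where f = yf and a = 0 and b = B])
  show "(yf has_real_derivative yf' (xf y)) (at (xf y))"
    by (rule yf_interior_deriv[OF xf_interior[OF y]])
  show "yf' (xf y) \<noteq> 0"
    using yf'_pos[of "xf y"] xf_interior[OF y] by auto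
  show "isCont xf y"
    using continuous_on_interior[OF xf_cont, of y] y by simp
qed (use y yf_xf in auto)

definition F :: "real \<Rightarrow> real" where "F x = (w x * p x) powr (1/4)"

definition F' :: "real \<Rightarrow> real"
  where "F' x = (w x * p x) powr (-3/4) * (w' x * p x + w x * p' x) / 4"

definition F'' :: "real \<Rightarrow> real"
  where "F'' x = ((-3/4) * (w x * p x) powr (-7/4) * (w' x * p x + w x * p' x)\<^sup>2
                  + (w x * p x) powr (-3/4) * (w'' x * p x + 2 * w' x * p' x + w x * p'' x)) / 4"

text \<open>
  A is the derivative of the amplitude with respect to the Liouville coordinate,
  F' / yf' = F' F^2 / w; the second form keeps the square root out of its derivative A'.
\<close>
definition A :: "real \<Rightarrow> real" where "A x = F' x * (F x)\<^sup>2 / w x"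

definition A' :: "real \<Rightarrow> real"
  where "A' x = (F'' x * (F x)\<^sup>2 + F' x * (2 * F x * F' x)) / w x - F' x * (F x)\<^sup>2 * w' x / (w x)\<^sup>2"

lemma wp_pos: "x \<in> {0..L} \<Longrightarrow> w x * p x > 0"
  using p_pos w_pos by simp

lemma F_pos: "x \<in> {0..L} \<Longrightarrow> F x > 0"
  unfolding F_def using p_pos[of x] w_pos[of x] by simp

lemma F_deriv: "x \<in> {0<..<L} \<Longrightarrow> (F has_real_derivative F' x) (at x)"
  unfolding F_def[abs_def] F'_def using wp_pos[of x]
  by (auto intro!: derivative_eq_intros interior_derivs simp: field_simps)

lemma F'_deriv: "x \<in> {0<..<L} \<Longrightarrow> (F' has_real_derivative F'' x) (at x)"
  unfolding F'_def[abs_def] F''_def using wp_pos[of x]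
  by (auto intro!: derivative_eq_intros interior_derivs simp: field_simps power2_eq_square)

lemma A_deriv: "x \<in> {0<..<L} \<Longrightarrow> (A has_real_derivative A' x) (at x)"
  unfolding A_def[abs_def] A'_def using w_pos[of x]
  by (auto intro!: derivative_eq_intros interior_derivs F_deriv F'_deriv
      simp: field_simps power2_eq_square)

lemma F_cont: "continuous_on {0..L} F" and A_cont: "continuous_on {0..L} A"
  and A'_cont: "continuous_on {0..L} A'"
  unfolding F_def[abs_def] A'_def[abs_def] F'_def[abs_def] F''_def[abs_def] A_def[abs_def]
  using p_pos w_pos
  by (auto intro!: continuous_intros p_cont p'_cont p''_cont w_cont w'_cont w''_cont) (force+)

lemma F_square: "x \<in> {0..L} \<Longrightarrow> (F x)\<^sup>2 = sqrt (w x * p x)"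
  unfolding F_def using wp_pos[of x]
  by (simp add: power2_eq_square powr_half_sqrt flip: powr_add)

lemma F_pow4:
  assumes "x \<in> {0..L}"
  shows "(F x) ^ 4 = w x * p x"
proof -
  have "(F x) ^ 4 = ((F x)\<^sup>2)\<^sup>2"
    by simp
  then show ?thesis
    using F_square[OF assms] wp_pos[OF assms] by simp
qed

lemma yf'_F_square: "x \<in> {0..L} \<Longrightarrow> yf' x * (F x)\<^sup>2 = w x"
  using p_pos[of x] w_pos[of x]
  by (simp add: F_square yf'_def flip: real_sqrt_mult)

lemma A_yf': "x \<in> {0..L} \<Longrightarrow> A x * yf' x = F' x"
  using yf'_F_square[of x] w_pos[of x] unfolding A_def by (simp add: field_simps)

definition potential :: "real \<Rightarrow> real"
  where "potential x = A' x / (yf' x * F x) + q x / w x"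

lemma potential_cont: "continuous_on {0..L} potential"
  unfolding potential_def[abs_def] using yf'_pos F_pos w_pos
  by (intro continuous_intros A'_cont yf'_cont F_cont q_cont w_cont) force+

lemma amplitude_deriv:
  assumes y: "y \<in> {0<..<B}"
  shows "((\<lambda>y. F (xf y)) has_real_derivative A (xf y)) (at y)"
proof -
  have "xf y \<in> {0..L}" "yf' (xf y) > 0"
    using xf_interior[OF y] yf'_pos by auto
  then have "F' (xf y) * inverse (yf' (xf y)) = A (xf y)"
    using A_yf'[of "xf y"] by (simp add: field_simps)
  then show ?thesis
    using DERIV_chain2[OF F_deriv[OF xf_interior[OF y]] xf_deriv[OF y]] by simp
qed

lemma amplitude_deriv2:
  assumes y: "y \<in> {0<..<B}"
  shows "deriv (deriv (\<lambda>y. F (xf y))) y = A' (xf y) / yf' (xf y)"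
proof -
  have "((\<lambda>y. A (xf y)) has_real_derivative A' (xf y) / yf' (xf y)) (at y)"
    using DERIV_chain2[OF A_deriv[OF xf_interior[OF y]] xf_deriv[OF y]] by (simp add: divide_inverse)
  then have "(deriv (\<lambda>y. F (xf y)) has_real_derivative A' (xf y) / yf' (xf y)) (at y)"
  proof (rule has_field_derivative_transform_within_open[where S = "{0<..<B}"])
    show "A (xf z) = deriv (\<lambda>y. F (xf y)) z" if "z \<in> {0<..<B}" for z
      using DERIV_imp_deriv[OF amplitude_deriv[OF that]] by simp
  qed (use y in auto)
  then show ?thesis
    by (rule DERIV_imp_deriv)
qed

definition Q :: "real \<Rightarrow> real"
  where "Q y = deriv (deriv (\<lambda>y. F (xf y))) y / F (xf y) + q (xf y) / w (xf y)"

lemma Q_eq_potential: "y \<in> {0<..<B} \<Longrightarrow> Q y = potential (xf y)"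
  unfolding Q_def amplitude_deriv2 potential_def by simp

lemma abs_potential_le_supnorm_Q:
  assumes "y \<in> {0..B}"
  shows "\<bar>potential (xf y)\<bar> \<le> supnorm {0<..<B} Q"
proof -
  have "supnorm {0<..<B} Q = supnorm {0<..<B} (\<lambda>y. potential (xf y))"
    unfolding supnorm_def by (rule SUP_cong) (simp_all add: Q_eq_potential)
  then show ?thesis
    using abs_le_supnorm[OF continuous_on_comp_xf[OF potential_cont] B_pos assms] by simp
qed

lemma Lnorm_Q: "Lnorm 0 B t Q = Lnorm 0 B t (\<lambda>y. potential (xf y))"
proof -
  have "integral {0<..<B} (\<lambda>y. \<bar>Q y\<bar> powr t) = integral {0<..<B} (\<lambda>y. \<bar>potential (xf y)\<bar> powr t)"
    by (rule integral_cong) (simp add: Q_eq_potential)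
  then show ?thesis
    unfolding Lnorm_def integral_open_interval_real by simp
qed

text \<open>
  phi' is only known on the open interval; integrating the equation extends p phi' continuously
  to [0, L].
\<close>
definition flux :: "real \<Rightarrow> real"
  where "flux x = p (L/2) * dphi (L/2)
                  + (integral {0..x} (\<lambda>t. (q t - lam * w t) * phi t)
                     - integral {0..L/2} (\<lambda>t. (q t - lam * w t) * phi t))"

lemma flux_cont: "continuous_on {0..L} flux"
  unfolding flux_def[abs_def]
  by (intro continuous_intros indefinite_integral_continuous_1 integrable_continuous_real
      q_cont w_cont phi_cont)

lemma flux_deriv:
  assumes x: "x \<in> {0<..<L}"
  shows "(flux has_real_derivative (q x - lam * w x) * phi x) (at x)"
proof -
  have "((\<lambda>x. integral {0..x} (\<lambda>t. (q t - lam * w t) * phi t)) has_real_derivative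
          (q x - lam * w x) * phi x) (at x within {0..L})"
    using x by (intro integral_has_real_derivative continuous_intros q_cont w_cont phi_cont) auto
  then show ?thesis
    unfolding flux_def[abs_def] at_interior[OF x] by (auto intro!: derivative_eq_intros)
qed

lemma p_dphi_eq_flux:
  assumes x: "x \<in> {0<..<L}"
  shows "p x * dphi x = flux x"
proof -
  have "\<exists>C. \<forall>z\<in>{0<..<L}. p z * dphi z - flux z = C"
  proof (rule has_field_derivative_zero_constant)
    fix z assume z: "z \<in> {0<..<L}"
    have "ddphi z = (q z - lam * w z) * phi z"
      using eigen_eq[OF z] w_pos[of z] z by (simp add: field_simps)
    then show "((\<lambda>z. p z * dphi z - flux z) has_real_derivative 0) (at z within {0<..<L})"
      using DERIV_diff[OF p_dphi_deriv[OF z] flux_deriv[OF z]]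
      by (auto intro: has_field_derivative_at_within)
  qed simp
  then obtain C where C: "\<And>z. z \<in> {0<..<L} \<Longrightarrow> p z * dphi z - flux z = C"
    by blast
  have "C = 0"
    using C[of "L/2"] L_pos by (simp add: flux_def)
  then show ?thesis
    using C[OF x] by simp
qed

lemma has_integral_yf_substitution:
  assumes h: "continuous_on {0..B} h" and X: "X \<in> {0..L}"
  shows "((\<lambda>x. yf' x * h (yf x)) has_integral integral {0..yf X} h) {0..X}"
proof -
  have sub: "{0..X} \<subseteq> {0..L}"
    using X by auto
  have "((\<lambda>x. yf' x *\<^sub>R h (yf x)) has_integral integral {yf 0..yf X} h) {0..X}"
  proof (rule has_integral_substitution[OF _ _ _ h])
    show "yf 0 \<le> yf X"
      using X yf_strict_mono[of 0 X] by (cases "X = 0") auto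
    show "yf ` {0..X} \<subseteq> {0..B}"
      using sub yf_image by auto
    show "(yf has_real_derivative yf' x) (at x within {0..X})" if "x \<in> {0..X}" for x
      using yf_deriv[of x] that sub by (auto intro: has_field_derivative_subset)
  qed (use X in auto)
  then show ?thesis
    by (simp add: yf_0)
qed

definition u :: "real \<Rightarrow> real" where "u y = F (xf y) * phi (xf y)"

lemma u_cont: "continuous_on {0..B} u"
  unfolding u_def[abs_def]
  by (intro continuous_intros continuous_on_comp_xf F_cont phi_cont)

lemma u_yf: "x \<in> {0..L} \<Longrightarrow> u (yf x) = F x * phi x"
  unfolding u_def using xf_yf by simp

text \<open>
  In the Liouville coordinate the function below is u' sin (k (Y - y)) + k u cos (k (Y - y)),
  with u' = A phi + flux / F.  Its derivative is (u'' + k^2 u) sin (k (Y - y)) = potential u sin (k (Y - y))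
  times dy/dx; working in x avoids differentiating u twice.
\<close>
lemma duhamel_integrand_deriv:
  assumes k: "k\<^sup>2 = lam" and x: "x \<in> {0<..<L}"
  shows "((\<lambda>x. (A x * phi x + flux x / F x) * sin (k * (Y - yf x)) + k * (F x * phi x) * cos (k * (Y - yf x)))
          has_real_derivative sin (k * (Y - yf x)) * yf' x * (potential x * (F x * phi x))) (at x)"
proof -
  have x': "x \<in> {0..L}"
    using x by auto
  have pos: "F x > 0" "yf' x > 0"
    using F_pos[OF x'] yf'_pos[OF x'] by auto
  have w: "w x = yf' x * (F x)\<^sup>2"
    using yf'_F_square[OF x'] by simp
  have "(yf' x)\<^sup>2 = w x / p x"
    using p_pos[OF x'] w_pos[OF x'] by (simp add: yf'_def)
  then have p: "p x = (F x)\<^sup>2 / yf' x"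
    using w p_pos[OF x'] pos by (simp add: field_simps power2_eq_square)
  have A: "A x = F' x / yf' x"
    using A_yf'[OF x'] pos by (simp add: field_simps)
  have dphi: "dphi x = flux x * yf' x / (F x)\<^sup>2"
    using p_dphi_eq_flux[OF x] p pos by (simp add: field_simps)
  have F_nz: "F x \<noteq> 0"
    using pos by simp
  show ?thesis
    by (rule DERIV_cong, (auto intro!: derivative_eq_intros A_deriv[OF x] phi_deriv[OF x]
          flux_deriv[OF x] F_deriv[OF x] yf_interior_deriv[OF x] simp: F_nz)[1])
      (use pos in \<open>simp add: A w dphi potential_def field_simps power2_eq_square flip: k\<close>)
qed

lemma u_duhamel:
  assumes k: "k\<^sup>2 = lam" "k > 0" and Y: "Y \<in> {0..B}"
  shows "u Y = flux 0 / (k * F 0) * sin (k * Y)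
               + integral {0..Y} (\<lambda>t. sin (k * (Y - t)) * (potential (xf t) * u t)) / k"
proof -
  define X where "X = xf Y"
  have X: "X \<in> {0..L}" and YX: "yf X = Y"
    unfolding X_def using xf_mem[OF Y] yf_xf[OF Y] by auto
  define G where "G x = (A x * phi x + flux x / F x) * sin (k * (Y - yf x))
                        + k * (F x * phi x) * cos (k * (Y - yf x))" for x
  define h where "h t = sin (k * (Y - t)) * (potential (xf t) * u t)" for t
  have "continuous_on {0..L} G"
    unfolding G_def using F_pos
    by (intro continuous_intros A_cont phi_cont flux_cont F_cont yf_cont) force
  then have "((\<lambda>x. sin (k * (Y - yf x)) * yf' x * (potential x * (F x * phi x))) has_integral G X - G 0) {0..X}"
    using X duhamel_integrand_deriv[OF k(1)]
    by (intro fundamental_theorem_of_calculus_interior)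
      (auto simp: G_def has_real_derivative_iff_has_vector_derivative[symmetric]
        intro: continuous_on_subset)
  moreover have "((\<lambda>x. sin (k * (Y - yf x)) * yf' x * (potential x * (F x * phi x))) has_integral
                   integral {0..Y} h) {0..X}"
  proof (rule has_integral_eq[rotated])
    have "continuous_on {0..B} h"
      unfolding h_def by (intro continuous_intros continuous_on_comp_xf potential_cont u_cont)
    then show "((\<lambda>x. yf' x * h (yf x)) has_integral integral {0..Y} h) {0..X}"
      using has_integral_yf_substitution[OF _ X] YX by simp
    show "yf' x * h (yf x) = sin (k * (Y - yf x)) * yf' x * (potential x * (F x * phi x))"
      if "x \<in> {0..X}" for x
      using that X by (simp add: h_def u_yf xf_yf)
  qed
  ultimately have "G X - G 0 = integral {0..Y} h"
    by (rule has_integral_unique)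
  moreover have "G X = k * u Y" "G 0 = flux 0 / F 0 * sin (k * Y)"
    using YX X by (simp_all add: G_def u_def X_def yf_0 phi_0)
  ultimately show ?thesis
    using \<open>k > 0\<close> unfolding h_def[abs_def] by (simp add: field_simps)
qed

lemma integral_yf_substitution:
  "continuous_on {0..B} h \<Longrightarrow> integral {0..L} (\<lambda>x. yf' x * h (yf x)) = integral {0..B} h"
  using has_integral_yf_substitution[of h L] L_pos by (simp add: B_def integral_unique)

lemma yf'_F_pow4_weight:
  assumes x: "x \<in> {0..L}"
  shows "yf' x * (F x) ^ 4 * (p x powr (-1/2) * w x powr (-3/2)) = 1"
proof -
  have "p x > 0" "w x > 0"
    using p_pos[OF x] w_pos[OF x] by auto
  have "w x powr (3/2) = w x powr (1 + 1/2)"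
    by simp
  also have "\<dots> = w x * sqrt (w x)"
    using \<open>w x > 0\<close> by (subst powr_add) (simp add: powr_half_sqrt)
  finally show ?thesis
    using \<open>p x > 0\<close> \<open>w x > 0\<close>
    by (simp add: F_pow4[OF x] yf'_def powr_minus powr_half_sqrt real_sqrt_divide field_simps)
qed

lemma integral_phi_square:
  "integral {0..L} (\<lambda>x. (phi x)\<^sup>2) = integral {0..B} (\<lambda>y. (u y)\<^sup>2 * (1 / w (xf y)))"
proof -
  have "integral {0..L} (\<lambda>x. (phi x)\<^sup>2) = integral {0..L} (\<lambda>x. yf' x * ((u (yf x))\<^sup>2 * (1 / w (xf (yf x)))))"
  proof (rule integral_cong)
    fix x assume x: "x \<in> {0..L}"
    show "(phi x)\<^sup>2 = yf' x * ((u (yf x))\<^sup>2 * (1 / w (xf (yf x))))"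
      using yf'_F_square[OF x] w_pos[OF x] by (simp add: u_yf[OF x] xf_yf[OF x] field_simps)
  qed
  also have "\<dots> = integral {0..B} (\<lambda>y. (u y)\<^sup>2 * (1 / w (xf y)))"
    using w_pos xf_mem
    by (intro integral_yf_substitution continuous_intros u_cont continuous_on_comp_xf w_cont) force
  finally show ?thesis .
qed

lemma integral_phi_pow4:
  "integral {0..L} (\<lambda>x. (phi x) ^ 4)
     = integral {0..B} (\<lambda>y. (u y) ^ 4 * (p (xf y) powr (-1/2) * w (xf y) powr (-3/2)))"
proof -
  have "integral {0..L} (\<lambda>x. (phi x) ^ 4)
          = integral {0..L} (\<lambda>x. yf' x * ((u (yf x)) ^ 4 * (p (xf (yf x)) powr (-1/2) * w (xf (yf x)) powr (-3/2))))"
  proof (rule integral_cong)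
    fix x assume x: "x \<in> {0..L}"
    show "(phi x) ^ 4 = yf' x * ((u (yf x)) ^ 4 * (p (xf (yf x)) powr (-1/2) * w (xf (yf x)) powr (-3/2)))"
      using yf'_F_pow4_weight[OF x] by (simp add: u_yf[OF x] xf_yf[OF x] power_mult_distrib mult_ac)
  qed
  also have "\<dots> = integral {0..B} (\<lambda>y. (u y) ^ 4 * (p (xf y) powr (-1/2) * w (xf y) powr (-3/2)))"
    using p_pos w_pos xf_mem
    by (intro integral_yf_substitution continuous_intros u_cont continuous_on_comp_xf p_cont w_cont)
      (force+)
  finally show ?thesis .
qed

lemma u_integrals_pos:
  assumes "\<exists>x\<in>{0..L}. phi x \<noteq> 0"
  shows "integral {0..B} (\<lambda>y. (u y)\<^sup>2) > 0" and "integral {0..B} (\<lambda>y. (u y) ^ 4) > 0"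
proof -
  obtain x0 where x0: "x0 \<in> {0..L}" "phi x0 \<noteq> 0"
    using assms by blast
  then have "yf x0 \<in> {0..B}" "u (yf x0) \<noteq> 0"
    using yf_image F_pos[OF x0(1)] by (auto simp: u_yf)
  then show "integral {0..B} (\<lambda>y. (u y)\<^sup>2) > 0" "integral {0..B} (\<lambda>y. (u y) ^ 4) > 0"
    by (intro integral_pos_of_nonneg[OF _ _ B_pos] continuous_intros u_cont; simp)+
qed

lemma weight_supnorm_bounds:
  assumes x: "x \<in> {0..L}"
  shows "w x \<le> supnorm {0<..<L} w"
    and "1 / w x \<le> supnorm {0<..<L} (\<lambda>x. 1 / w x)"
    and "p x powr (-1/2) * w x powr (-3/2) \<le> supnorm {0<..<L} (\<lambda>x. p x powr (-1/2) * w x powr (-3/2))"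
    and "p x powr (1/2) * w x powr (3/2) \<le> supnorm {0<..<L} (\<lambda>x. p x powr (1/2) * w x powr (3/2))"
proof -
  have pos: "p x > 0" "w x > 0"
    using p_pos[OF x] w_pos[OF x] by auto
  have p_nz: "\<forall>x\<in>{0..L}. p x \<noteq> 0" and w_nz: "\<forall>x\<in>{0..L}. w x \<noteq> 0"
    using p_pos w_pos by force+
  note bound = abs_le_supnorm[OF _ L_pos x]
  show "w x \<le> supnorm {0<..<L} w"
    using bound[OF w_cont] pos by simp
  show "1 / w x \<le> supnorm {0<..<L} (\<lambda>x. 1 / w x)"
    using bound[of "\<lambda>x. 1 / w x"] pos w_nz by (simp add: continuous_on_divide w_cont)
  show "p x powr (-1/2) * w x powr (-3/2) \<le> supnorm {0<..<L} (\<lambda>x. p x powr (-1/2) * w x powr (-3/2))"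
    using bound[of "\<lambda>x. p x powr (-1/2) * w x powr (-3/2)"] p_nz w_nz
    by (simp add: continuous_intros p_cont w_cont)
  show "p x powr (1/2) * w x powr (3/2) \<le> supnorm {0<..<L} (\<lambda>x. p x powr (1/2) * w x powr (3/2))"
    using bound[of "\<lambda>x. p x powr (1/2) * w x powr (3/2)"] p_nz w_nz
    by (simp add: continuous_intros p_cont w_cont)
qed

lemma weight_supnorms_pos:
  shows "supnorm {0<..<L} w > 0"
    and "supnorm {0<..<L} (\<lambda>x. p x powr (-1/2) * w x powr (-3/2)) > 0"
    and "supnorm {0<..<L} (\<lambda>x. p x powr (1/2) * w x powr (3/2)) > 0"
proof -
  have "0 \<in> {0..L}" "p 0 > 0" "w 0 > 0"
    using L_pos p_pos[of 0] w_pos[of 0] by auto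
  then show "supnorm {0<..<L} w > 0"
    and "supnorm {0<..<L} (\<lambda>x. p x powr (-1/2) * w x powr (-3/2)) > 0"
    and "supnorm {0<..<L} (\<lambda>x. p x powr (1/2) * w x powr (3/2)) > 0"
    using weight_supnorm_bounds[of 0] by (smt (verit) mult_pos_pos powr_gt_zero)+
qed

lemma phi_loc_coeff_bounds:
  assumes nz: "\<exists>x\<in>{0..L}. phi x \<noteq> 0"
  defines "W \<equiv> supnorm {0<..<L} w"
    and "W' \<equiv> supnorm {0<..<L} (\<lambda>x. 1 / w x)"
    and "P \<equiv> supnorm {0<..<L} (\<lambda>x. p x powr (-1/2) * w x powr (-3/2))"
    and "P' \<equiv> supnorm {0<..<L} (\<lambda>x. p x powr (1/2) * w x powr (3/2))"
  shows "W powr (-2) * P powr (-1) * loc_coeff 0 B u \<le> loc_coeff 0 L phi"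
    and "loc_coeff 0 L phi \<le> W'\<^sup>2 * P' * loc_coeff 0 B u"
proof -
  define \<rho> where "\<rho> y = 1 / w (xf y)" for y
  define \<sigma> where "\<sigma> y = p (xf y) powr (-1/2) * w (xf y) powr (-3/2)" for y
  have "W > 0" "P > 0" "P' > 0"
    unfolding W_def P_def P'_def by (rule weight_supnorms_pos)+
  have "continuous_on {0..B} \<rho>" "continuous_on {0..B} \<sigma>"
    unfolding \<rho>_def[abs_def] \<sigma>_def[abs_def] using p_pos w_pos xf_mem
    by (intro continuous_intros continuous_on_comp_xf p_cont w_cont; force)+
  moreover have "1 / W \<le> \<rho> y \<and> \<rho> y \<le> W'" "1 / P' \<le> \<sigma> y \<and> \<sigma> y \<le> P" if "y \<in> {0..B}" for y
    using weight_supnorm_bounds[OF xf_mem[OF that]] p_pos[OF xf_mem[OF that]] w_pos[OF xf_mem[OF that]]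
    by (auto simp: \<rho>_def \<sigma>_def W_def W'_def P_def P'_def frac_le powr_minus_divide)
  ultimately have "(1 / W)\<^sup>2 / P * loc_coeff 0 B u
                     \<le> (integral {0..B} (\<lambda>y. (u y)\<^sup>2 * \<rho> y))\<^sup>2 / integral {0..B} (\<lambda>y. (u y) ^ 4 * \<sigma> y)"
    and "(integral {0..B} (\<lambda>y. (u y)\<^sup>2 * \<rho> y))\<^sup>2 / integral {0..B} (\<lambda>y. (u y) ^ 4 * \<sigma> y)
           \<le> W'\<^sup>2 / (1 / P') * loc_coeff 0 B u"
    using weighted_loc_coeff_bounds[OF u_cont, of \<rho> \<sigma> "1 / W" W' "1 / P'" P] u_integrals_pos(2)[OF nz]
      \<open>W > 0\<close> \<open>P' > 0\<close> by auto
  moreover have "loc_coeff 0 L phi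
      = (integral {0..B} (\<lambda>y. (u y)\<^sup>2 * \<rho> y))\<^sup>2 / integral {0..B} (\<lambda>y. (u y) ^ 4 * \<sigma> y)"
    by (simp add: loc_coeff_eq_integrals integral_phi_square integral_phi_pow4 \<rho>_def \<sigma>_def)
  ultimately show "W powr (-2) * P powr (-1) * loc_coeff 0 B u \<le> loc_coeff 0 L phi"
    and "loc_coeff 0 L phi \<le> W'\<^sup>2 * P' * loc_coeff 0 B u"
    using \<open>W > 0\<close> \<open>P > 0\<close> by (simp_all add: powr_minus power_one_over divide_inverse power_inverse)
qed

lemma u_sin_loc_coeff_bounds:
  assumes nz: "\<exists>x\<in>{0..L}. phi x \<noteq> 0"
    and a_def: "a = B * supnorm {0<..<B} Q / (2 * sqrt lam)"
    and b_def: "b = (B ^ 3 / 12 + 5 * B / (32 * lam) + 5 / (32 * lam powr (3/2))) powr (1/4)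
                    * Lnorm 0 B 4 Q / sqrt lam"
    and "a < 1" "b < 1"
  shows "((1 - b) / (1 + a)) ^ 4 \<le> loc_coeff 0 B u / loc_coeff 0 B (\<lambda>y. sin (sqrt lam * y))"
    and "loc_coeff 0 B u / loc_coeff 0 B (\<lambda>y. sin (sqrt lam * y)) \<le> ((1 + b) / (1 - a)) ^ 4"
proof -
  define k where "k = sqrt lam"
  have k: "k\<^sup>2 = lam" "k > 0"
    using lam_pos by (auto simp: k_def)
  have "lam powr (3/2) = (lam powr (1/2)) ^ 3"
    using lam_pos by (simp add: powr_power)
  then have lam_32: "lam powr (3/2) = k ^ 3"
    using lam_pos by (simp add: k_def powr_half_sqrt)
  note duhamel = u_duhamel[OF k]
  have sin_cont: "continuous_on {0..B} (\<lambda>y. sin (k * y))"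
    by (intro continuous_intros)
  have "a \<ge> 0"
    using abs_potential_le_supnorm_Q[of 0] B_pos lam_pos by (simp add: a_def)
  have close2: "Lnorm 0 B 2 (\<lambda>y. u y - flux 0 / (k * F 0) * sin (k * y)) \<le> a * Lnorm 0 B 2 u"
    unfolding a_def k_def[symmetric]
    by (rule duhamel_perturbation_Lnorm_2[OF k(2) less_imp_le[OF B_pos] u_cont
          continuous_on_comp_xf[OF potential_cont] duhamel abs_potential_le_supnorm_Q])
  have "b = (B ^ 3 / 12 + 5 * B / (32 * k\<^sup>2) + 5 / (32 * k ^ 3)) powr (1/4)
            * Lnorm 0 B 4 (\<lambda>y. potential (xf y)) / k"
    unfolding b_def Lnorm_Q lam_32 k(1) k_def[symmetric] ..
  then have close4: "Lnorm 0 B 4 (\<lambda>y. u y - flux 0 / (k * F 0) * sin (k * y)) \<le> b * Lnorm 0 B 4 u"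
    by (simp only: duhamel_perturbation_Lnorm_4[OF k(2) less_imp_le[OF B_pos] u_cont
        continuous_on_comp_xf[OF potential_cont] duhamel])
  have "Lnorm 0 B 2 u ^ 2 > 0" "Lnorm 0 B 4 u ^ 4 > 0"
    using u_integrals_pos[OF nz] by (simp_all only: Lnorm_2_power Lnorm_4_power)
  then have "Lnorm 0 B 2 u > 0" "Lnorm 0 B 4 u > 0"
    using Lnorm_nonneg[of 0 B 2 u] Lnorm_nonneg[of 0 B 4 u] by (auto simp: order_le_less)
  moreover have "b \<ge> 0"
    unfolding b_def using lam_pos
    by (intro divide_nonneg_nonneg mult_nonneg_nonneg) (simp_all add: Lnorm_nonneg)
  ultimately show "((1 - b) / (1 + a)) ^ 4 \<le> loc_coeff 0 B u / loc_coeff 0 B (\<lambda>y. sin (sqrt lam * y))"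
    and "loc_coeff 0 B u / loc_coeff 0 B (\<lambda>y. sin (sqrt lam * y)) \<le> ((1 + b) / (1 - a)) ^ 4"
    using loc_coeff_ratio_bounds[OF u_cont sin_cont \<open>a \<ge> 0\<close> \<open>a < 1\<close> _ \<open>b < 1\<close> close2 close4]
    unfolding k_def by auto
qed

lemma phi_sin_loc_coeff_bounds:
  assumes nz: "\<exists>x\<in>{0..L}. phi x \<noteq> 0"
    and a_def: "a = B * supnorm {0<..<B} Q / (2 * sqrt lam)"
    and b_def: "b = (B ^ 3 / 12 + 5 * B / (32 * lam) + 5 / (32 * lam powr (3/2))) powr (1/4)
                    * Lnorm 0 B 4 Q / sqrt lam"
    and "a < 1" "b < 1"
  defines "Phi \<equiv> \<lambda>y. sin (sqrt lam * y)"
  shows "(supnorm {0<..<L} w) powr (-2) * (supnorm {0<..<L} (\<lambda>x. p x powr (-1/2) * w x powr (-3/2))) powr (-1)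
           * ((1 - b) / (1 + a)) ^ 4
         \<le> loc_coeff 0 L phi / loc_coeff 0 B Phi
       \<and> loc_coeff 0 L phi / loc_coeff 0 B Phi
         \<le> (supnorm {0<..<L} (\<lambda>x. 1 / w x)) ^ 2 * supnorm {0<..<L} (\<lambda>x. p x powr (1/2) * w x powr (3/2))
           * ((1 + b) / (1 - a)) ^ 4"
proof -
  define ratio where "ratio = loc_coeff 0 B u / loc_coeff 0 B Phi"
  have ratio: "((1 - b) / (1 + a)) ^ 4 \<le> ratio" "ratio \<le> ((1 + b) / (1 - a)) ^ 4"
    using u_sin_loc_coeff_bounds[OF nz a_def b_def \<open>a < 1\<close> \<open>b < 1\<close>]
    unfolding ratio_def Phi_def by auto
  have "0 \<le> loc_coeff 0 B Phi"
    by (simp add: loc_coeff_def Lnorm_nonneg)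
  show ?thesis
  proof
    show "(supnorm {0<..<L} w) powr (-2) * (supnorm {0<..<L} (\<lambda>x. p x powr (-1/2) * w x powr (-3/2))) powr (-1)
            * ((1 - b) / (1 + a)) ^ 4 \<le> loc_coeff 0 L phi / loc_coeff 0 B Phi" (is "?c * _ \<le> _")
    proof -
      have "?c * ((1 - b) / (1 + a)) ^ 4 \<le> ?c * ratio"
        by (rule mult_left_mono[OF ratio(1)]) simp
      also have "\<dots> \<le> loc_coeff 0 L phi / loc_coeff 0 B Phi"
        using divide_right_mono[OF phi_loc_coeff_bounds(1)[OF nz] \<open>0 \<le> loc_coeff 0 B Phi\<close>]
        by (simp add: ratio_def)
      finally show ?thesis .
    qed
    show "loc_coeff 0 L phi / loc_coeff 0 B Phi
            \<le> (supnorm {0<..<L} (\<lambda>x. 1 / w x)) ^ 2 * supnorm {0<..<L} (\<lambda>x. p x powr (1/2) * w x powr (3/2))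
              * ((1 + b) / (1 - a)) ^ 4" (is "_ \<le> ?c * _")
    proof -
      have "loc_coeff 0 L phi / loc_coeff 0 B Phi \<le> ?c * ratio"
        using divide_right_mono[OF phi_loc_coeff_bounds(2)[OF nz] \<open>0 \<le> loc_coeff 0 B Phi\<close>]
        by (simp add: ratio_def)
      also have "\<dots> \<le> ?c * ((1 + b) / (1 - a)) ^ 4"
        using weight_supnorms_pos(3) by (intro mult_left_mono[OF ratio(2)]) simp
      finally show ?thesis .
    qed
  qed
qed

end

theorem theorem1p1:
  fixes L lam :: real and p w q phi dphi ddphi yf xf f Q Phi :: "real \<Rightarrow> real"
    and B a b :: real
  assumes L_pos: "L > 0"
    and p_C2: "C2_on 0 L p" and w_C2: "C2_on 0 L w"
    and p_pos: "\<forall>x\<in>{0..L}. p x > 0" and w_pos: "\<forall>x\<in>{0..L}. w x > 0"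
    and p_inv_bdd: "bdd_above ((\<lambda>x. \<bar>1 / p x\<bar>) ` {0<..<L})"
    and w_inv_bdd: "bdd_above ((\<lambda>x. \<bar>1 / w x\<bar>) ` {0<..<L})"
    and q_cont: "continuous_on {0..L} q" and q_nonneg: "\<forall>x\<in>{0..L}. q x \<ge> 0"
    and lam_pos: "lam > 0"
    and phi_cont: "continuous_on {0..L} phi"
    and phi_d1: "\<forall>x\<in>{0<..<L}. (phi has_real_derivative dphi x) (at x)"
    and phi_d2: "\<forall>x\<in>{0<..<L}. ((\<lambda>t. p t * dphi t) has_real_derivative ddphi x) (at x)"
    and phi_eq: "\<forall>x\<in>{0<..<L}. - ddphi x / w x + q x / w x * phi x = lam * phi x"
    and phi_bc: "phi 0 = 0" "phi L = 0"
    and phi_nz: "\<exists>x\<in>{0..L}. phi x \<noteq> 0"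
    and yf_def: "yf = (\<lambda>x. integral {0..x} (\<lambda>s. sqrt (w s / p s)))"
    and B_def: "B = integral {0..L} (\<lambda>s. sqrt (w s / p s))"
    and xf_def: "xf = the_inv_into {0..L} yf"
    and f_def: "f = (\<lambda>y. (w (xf y) * p (xf y)) powr (1/4))"
    and Q_def: "Q = (\<lambda>y. deriv (deriv f) y / f y + q (xf y) / w (xf y))"
    and a_def: "a = B * supnorm {0<..<B} Q / (2 * sqrt lam)"
    and b_def: "b = (B ^ 3 / 12 + 5 * B / (32 * lam) + 5 / (32 * lam powr (3/2))) powr (1/4)
                    * Lnorm 0 B 4 Q / sqrt lam"
    and Phi_def: "Phi = (\<lambda>y. sin (sqrt lam * y))"
    and a_lt: "a < 1" and b_lt: "b < 1"
  shows "(supnorm {0<..<L} w) powr (-2) * (supnorm {0<..<L} (\<lambda>x. p x powr (-1/2) * w x powr (-3/2))) powr (-1)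
           * ((1 - b) / (1 + a)) ^ 4
         \<le> loc_coeff 0 L phi / loc_coeff 0 B Phi
       \<and> loc_coeff 0 L phi / loc_coeff 0 B Phi
         \<le> (supnorm {0<..<L} (\<lambda>x. 1 / w x)) ^ 2 * supnorm {0<..<L} (\<lambda>x. p x powr (1/2) * w x powr (3/2))
           * ((1 + b) / (1 - a)) ^ 4"
proof -
  obtain p' p'' where p_derivs: "\<forall>x\<in>{0..L}. (p has_real_derivative p' x) (at x within {0..L})"
      "\<forall>x\<in>{0..L}. (p' has_real_derivative p'' x) (at x within {0..L})" "continuous_on {0..L} p''"
    using p_C2 unfolding C2_on_def by blast
  obtain w' w'' where w_derivs: "\<forall>x\<in>{0..L}. (w has_real_derivative w' x) (at x within {0..L})"
      "\<forall>x\<in>{0..L}. (w' has_real_derivative w'' x) (at x within {0..L})" "continuous_on {0..L} w''"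
    using w_C2 unfolding C2_on_def by blast
  interpret T: liouville_transform L lam p w p' p'' w' w'' q phi dphi ddphi
    using L_pos p_derivs w_derivs p_pos w_pos q_cont lam_pos phi_cont phi_d1 phi_d2 phi_eq phi_bc(1)
    by unfold_locales auto
  have yf_eq: "yf = T.yf" and B_eq: "B = T.B"
    unfolding yf_def B_def T.B_def T.yf_def[abs_def] T.yf'_def[abs_def] by simp_all
  have Q_eq: "Q = T.Q"
    unfolding Q_def f_def xf_def yf_eq T.xf_def[symmetric] T.Q_def[abs_def] T.F_def[abs_def] ..
  show ?thesis
    using T.phi_sin_loc_coeff_bounds[OF phi_nz, folded B_eq Q_eq, OF a_def b_def a_lt b_lt]
    unfolding Phi_def .
qed

end
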